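(* Let $\Omega\subset\mathbb{C}$ be a Carathéodory domain and $\varphi$ a subharmonic function on $\mathbb{C}$. Suppose $P$ is a holomorphic polynomial with $\int_\Omega|P|^2e^{-\varphi}d\lambda<\infty$. Let $p\in\partial\Omega$ and let $\Delta\subset\mathbb{C}\setminus\Omega$ be a disc with $p\in\partial\Delta$. Then for every $\varepsilon>0$ there is a function $\widetilde P$ holomorphic on a neighborhood of $\overline{\Omega}$ with $\widetilde P(p)=0$ and $\int_\Omega|\widetilde P-P|^2e^{-\varphi}d\lambda<\varepsilon$.
   Context: A Carathéodory domain is a simply-connected bounded domain $\Omega\subset\mathbb{C}$ whose boundary is also the boundary of an unbounded domain. $d\lambda$ is Lebesgue measure. *)

theory Defs
  imports "HOL-Complex_Analysis.Complex_Analysis" "HOL-Computational_Algebra.Polynomial"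
begin

definition caratheodory_domain :: "complex set \<Rightarrow> bool" where
  "caratheodory_domain \<Omega> \<longleftrightarrow>
     open \<Omega> \<and> connected \<Omega> \<and> \<Omega> \<noteq> {} \<and> bounded \<Omega> \<and> simply_connected \<Omega> \<and>
     (\<exists>U. open U \<and> connected U \<and> U \<noteq> {} \<and> \<not> bounded U \<and> frontier U = frontier \<Omega>)"

definition usc :: "(complex \<Rightarrow> ereal) \<Rightarrow> bool" where
  "usc \<phi> \<longleftrightarrow> (\<forall>a::ereal. open {z. \<phi> z < a})"

definition circle_mean :: "(complex \<Rightarrow> ereal) \<Rightarrow> complex \<Rightarrow> real \<Rightarrow> ereal" where
  "circle_mean \<phi> z r =
     (enn2ereal (\<integral>\<^sup>+ t. indicator {0..2*pi} t * e2ennreal (max 0 (\<phi> (z + of_real r * cis t))) \<partial>lborel)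
      - enn2ereal (\<integral>\<^sup>+ t. indicator {0..2*pi} t * e2ennreal (max 0 (- \<phi> (z + of_real r * cis t))) \<partial>lborel))
     / ereal (2 * pi)"

definition subharmonic_on_C :: "(complex \<Rightarrow> ereal) \<Rightarrow> bool" where
  "subharmonic_on_C \<phi> \<longleftrightarrow>
     (\<forall>z. \<phi> z < \<infinity>) \<and> usc \<phi> \<and> (\<exists>z. \<phi> z \<noteq> -\<infinity>) \<and>
     (\<forall>z r. r > 0 \<longrightarrow> \<phi> z \<le> circle_mean \<phi> z r)"

definition weight :: "(complex \<Rightarrow> ereal) \<Rightarrow> complex \<Rightarrow> ennreal" where
  "weight \<phi> z = (if \<phi> z = -\<infinity> then \<infinity> else ennreal (exp (- real_of_ereal (\<phi> z))))"

end

theory Submission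
  imports Defs
begin

text \<open>With \<open>\<Delta> = ball c r\<close>, the function \<open>u z = (p - c) / (z - c)\<close> is holomorphic off \<open>c\<close>,
equals \<open>1\<close> at \<open>p\<close> and has modulus \<open>< 1\<close> on \<open>\<Omega>\<close>, because the open set \<open>\<Omega>\<close> misses the closed disc.
Hence \<open>P (1 - u^n)\<close> vanishes at \<open>p\<close>, and its weighted \<open>L^2\<close> distance to \<open>P\<close>, the integral of
\<open>|u|^(2n) |P|^2 e^(-\<phi>)\<close> over \<open>\<Omega>\<close>, tends to \<open>0\<close> by dominated convergence with the integrable
majorant \<open>|P|^2 e^(-\<phi>)\<close>.\<close>

lemma usc_borel_measurable:
  assumes "usc \<phi>" shows "\<phi> \<in> borel_measurable borel"
proof (rule borel_measurableI_less)
  fix y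
  have "open {z. \<phi> z < y}" using assms unfolding usc_def by blast
  then show "{x \<in> space borel. \<phi> x < y} \<in> sets borel" by auto
qed

lemma weight_borel_measurable:
  assumes "usc \<phi>" shows "weight \<phi> \<in> borel_measurable borel"
proof -
  note [measurable] = usc_borel_measurable[OF assms]
  show ?thesis unfolding weight_def[abs_def] by measurable
qed

lemma nn_set_integral_power_tendsto_0:
  fixes q :: "'a \<Rightarrow> real"
  assumes [measurable]: "A \<in> sets M" "q \<in> borel_measurable M" "g \<in> borel_measurable M"
    and finite: "(\<integral>\<^sup>+x\<in>A. g x \<partial>M) < \<infinity>"
    and q: "\<And>x. x \<in> A \<Longrightarrow> 0 \<le> q x \<and> q x < 1"
  shows "(\<lambda>n. \<integral>\<^sup>+x\<in>A. ennreal (q x ^ n) * g x \<partial>M) \<longlonglongrightarrow> 0"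
proof -
  have "AE x in M. g x * indicator A x \<noteq> \<infinity>"
    using finite by (intro nn_integral_PInf_AE) auto
  then have pointwise: "AE x in M. (\<lambda>n. ennreal (q x ^ n) * g x * indicator A x) \<longlonglongrightarrow> 0"
  proof eventually_elim
    case (elim x)
    show ?case
    proof (cases "x \<in> A")
      case True
      then have "(\<lambda>n. q x ^ n) \<longlonglongrightarrow> 0"
        using q by (intro LIMSEQ_power_zero) auto
      then have "(\<lambda>n. g x * ennreal (q x ^ n)) \<longlonglongrightarrow> g x * ennreal 0"
        using elim True by (intro ennreal_tendsto_cmult tendsto_ennrealI) (auto simp: top.not_eq_extremum)
      with True show ?thesis by (simp add: mult.commute)
    qed simp
  qed
  have bound: "ennreal (q x ^ n) * g x * indicator A x \<le> g x * indicator A x" for x n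
  proof (cases "x \<in> A")
    case True
    then have "q x ^ n \<le> 1" using q[OF True] by (simp add: power_le_one)
    then show ?thesis
      using True mult_right_mono[of "ennreal (q x ^ n)" 1 "g x"] by (simp add: ennreal_le_1)
  qed simp
  have "(\<lambda>n. \<integral>\<^sup>+x. ennreal (q x ^ n) * g x * indicator A x \<partial>M) \<longlonglongrightarrow> (\<integral>\<^sup>+x. 0 \<partial>M)"
    using bound finite pointwise
    by (intro nn_integral_dominated_convergence[where w = "\<lambda>x. g x * indicator A x"]) auto
  then show ?thesis by simp
qed

lemma dist_gt_radius_if_ball_disjoint_open:
  fixes c z :: "'a::real_normed_vector"
  assumes "open S" "r > 0" "ball c r \<subseteq> - S" "z \<in> S"
  shows "dist c z > r"
proof -
  have "S \<inter> closure (ball c r) = {}"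
    using assms(1,3) open_Int_closure_eq_empty[of S "ball c r"] by blast
  then have "z \<notin> closure (ball c r)" using assms(4) by blast
  then show ?thesis using assms(2) by (simp add: closure_ball not_le)
qed

lemma norm_divide_less_1_if_ball_disjoint_open:
  fixes c p z :: "'a::real_normed_field"
  assumes "open S" "r > 0" "ball c r \<subseteq> - S" "p \<in> frontier (ball c r)" "z \<in> S"
  shows "norm ((p - c) / (z - c)) < 1"
  using dist_gt_radius_if_ball_disjoint_open[OF assms(1,2,3,5)] assms(2,4)
  by (simp add: norm_divide dist_norm norm_minus_commute divide_less_eq)

lemma weighted_poly_borel_measurable:
  assumes "usc \<phi>"
  shows "(\<lambda>z. ennreal ((cmod (poly P z))\<^sup>2) * weight \<phi> z) \<in> borel_measurable borel"
proof -
  have [measurable]: "poly P \<in> borel_measurable borel"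
    by (intro borel_measurable_continuous_onI) (auto intro: continuous_intros)
  note [measurable] = weight_borel_measurable[OF assms]
  show ?thesis by measurable
qed

theorem theorem4p4:
  fixes \<Omega> :: "complex set" and \<phi> :: "complex \<Rightarrow> ereal" and P :: "complex poly"
    and p c :: complex and r :: real and \<epsilon> :: real
  assumes "caratheodory_domain \<Omega>"
    and "subharmonic_on_C \<phi>"
    and "(\<integral>\<^sup>+ z\<in>\<Omega>. ennreal ((cmod (poly P z))\<^sup>2) * weight \<phi> z \<partial>lborel) < \<infinity>"
    and "p \<in> frontier \<Omega>"
    and "r > 0" and "ball c r \<subseteq> - \<Omega>" and "p \<in> frontier (ball c r)"
    and "\<epsilon> > 0"
  shows "\<exists>U Pt. open U \<and> closure \<Omega> \<subseteq> U \<and> Pt holomorphic_on U \<and> Pt p = 0 \<and>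
           (\<integral>\<^sup>+ z\<in>\<Omega>. ennreal ((cmod (Pt z - poly P z))\<^sup>2) * weight \<phi> z \<partial>lborel) < ennreal \<epsilon>"
proof -
  have "open \<Omega>" using assms(1) unfolding caratheodory_domain_def by blast
  have "usc \<phi>" using assms(2) unfolding subharmonic_on_C_def by blast
  have "dist c p = r" using assms(5,7) by simp
  have "c \<notin> closure \<Omega>"
    using assms(5,6) open_Int_closure_eq_empty[of "ball c r" \<Omega>] by (auto simp: disjoint_iff)
  define u where "u z = (p - c) / (z - c)" for z
  have u_less_1: "cmod (u z) < 1" if "z \<in> \<Omega>" for z
    unfolding u_def using \<open>open \<Omega>\<close> assms(5,6,7) that by (rule norm_divide_less_1_if_ball_disjoint_open)
  define E where "E n = (\<integral>\<^sup>+z\<in>\<Omega>. ennreal (((cmod (u z))\<^sup>2) ^ n) *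
                            (ennreal ((cmod (poly P z))\<^sup>2) * weight \<phi> z) \<partial>lborel)" for n
  have "E \<longlonglongrightarrow> 0"
    unfolding E_def
  proof (rule nn_set_integral_power_tendsto_0)
    show "0 \<le> (cmod (u z))\<^sup>2 \<and> (cmod (u z))\<^sup>2 < 1" if "z \<in> \<Omega>" for z
      using u_less_1[OF that] by (simp add: abs_square_less_1)
    show "\<Omega> \<in> sets lborel" using \<open>open \<Omega>\<close> by simp
    show "(\<lambda>z. (cmod (u z))\<^sup>2) \<in> borel_measurable lborel" unfolding u_def by measurable
    show "(\<lambda>z. ennreal ((cmod (poly P z))\<^sup>2) * weight \<phi> z) \<in> borel_measurable lborel"
      using weighted_poly_borel_measurable[OF \<open>usc \<phi>\<close>] by simp
  qed (use assms(3) in simp)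
  then have "\<forall>\<^sub>F n in sequentially. E n < ennreal \<epsilon>"
    using assms(8) by (intro order_tendstoD(2)) auto
  then obtain n where "E n < ennreal \<epsilon>"
    by (auto simp: eventually_sequentially)
  define Pt where "Pt z = poly P z * (1 - u z ^ n)" for z
  have "(cmod (Pt z - poly P z))\<^sup>2 = ((cmod (u z))\<^sup>2) ^ n * (cmod (poly P z))\<^sup>2" for z
    by (simp add: Pt_def algebra_simps norm_mult norm_power power_mult_distrib flip: power_mult)
  then have "(\<integral>\<^sup>+ z\<in>\<Omega>. ennreal ((cmod (Pt z - poly P z))\<^sup>2) * weight \<phi> z \<partial>lborel) = E n"
    by (simp add: E_def ennreal_mult mult.assoc)
  moreover have "Pt holomorphic_on - {c}"
    unfolding Pt_def u_def by (intro holomorphic_intros) auto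
  moreover have "Pt p = 0"
    using \<open>dist c p = r\<close> assms(5) by (auto simp: Pt_def u_def)
  ultimately show ?thesis
    using \<open>c \<notin> closure \<Omega>\<close> \<open>E n < ennreal \<epsilon>\<close>
    by (intro exI[of _ "- {c}"] exI[of _ Pt]) auto
qed

end
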